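(* Let $r\ge1$ and let $\mathcal V$ be a $(3,2r)$-modular variety. Then for every $\ell\ge1$, $\mathcal V$ satisfies $$A_\ell(\alpha,\beta,\gamma)\subseteq\alpha\beta\circ_{2r^\ell}\alpha\gamma$$ for all congruences $\alpha,\beta,\gamma$; that is, $D^*_{\mathcal V}(\ell)\le 2r^\ell$.
   Context: $\circ$ is relational composition, juxtaposition is intersection. For relations $X,Y$ and $m\ge1$, $X\circ_m Y$ denotes $X\circ Y\circ X\circ\cdots$ with $m$ factors. A variety is $(3,k)$-modular if each of its algebras satisfies $\alpha(\beta\circ\alpha\gamma\circ\beta)\subseteq\alpha\beta\circ_k\alpha\gamma$ for all congruences. The relation terms $A_\ell(\alpha,\beta,\gamma)$ are defined recursively: $A_1(\alpha,\beta,\gamma)=\alpha(\beta\circ\alpha\gamma\circ\beta)$ and $A_{\ell+1}(\alpha,\beta,\gamma)=\alpha\big(\beta\circ A_\ell(\alpha,\gamma,\beta)\circ\beta\big)$ (so e.g. $A_2=\alpha(\beta\circ\alpha(\gamma\circ\alpha\beta\circ\gamma)\circ\beta)$). $D^*_{\mathcal V}(\ell)$ is the least $k$ such that $\mathcal V$ satisfies $A_\ell(\alpha,\beta,\gamma)\subseteq\alpha\beta\circ_k\alpha\gamma$. *)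

theory Defs
  imports Main
begin

datatype ('f, 'v) trm = Var 'v | Fn 'f "('f, 'v) trm list"

fun wf_trm :: "('f \<Rightarrow> nat) \<Rightarrow> ('f, 'v) trm \<Rightarrow> bool" where
  "wf_trm ar (Var v) = True"
| "wf_trm ar (Fn f ts) = (length ts = ar f \<and> (\<forall>t\<in>set ts. wf_trm ar t))"

fun eval_trm :: "('f \<Rightarrow> 'a list \<Rightarrow> 'a) \<Rightarrow> ('v \<Rightarrow> 'a) \<Rightarrow> ('f, 'v) trm \<Rightarrow> 'a" where
  "eval_trm F \<sigma> (Var v) = \<sigma> v"
| "eval_trm F \<sigma> (Fn f ts) = F f (map (eval_trm F \<sigma>) ts)"

definition algebra :: "('f \<Rightarrow> nat) \<Rightarrow> 'a set \<Rightarrow> ('f \<Rightarrow> 'a list \<Rightarrow> 'a) \<Rightarrow> bool" where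
  "algebra ar A F \<longleftrightarrow> (\<forall>f xs. length xs = ar f \<and> set xs \<subseteq> A \<longrightarrow> F f xs \<in> A)"

definition satisfies :: "'a set \<Rightarrow> ('f \<Rightarrow> 'a list \<Rightarrow> 'a) \<Rightarrow> (('f, nat) trm \<times> ('f, nat) trm) set \<Rightarrow> bool" where
  "satisfies A F \<Sigma> \<longleftrightarrow> (\<forall>(s, t)\<in>\<Sigma>. \<forall>\<sigma>. range \<sigma> \<subseteq> A \<longrightarrow> eval_trm F \<sigma> s = eval_trm F \<sigma> t)"

definition in_variety :: "('f \<Rightarrow> nat) \<Rightarrow> (('f, nat) trm \<times> ('f, nat) trm) set \<Rightarrow> 'a set \<Rightarrow> ('f \<Rightarrow> 'a list \<Rightarrow> 'a) \<Rightarrow> bool" where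
  "in_variety ar \<Sigma> A F \<longleftrightarrow> algebra ar A F \<and> satisfies A F \<Sigma>"

definition congruence :: "('f \<Rightarrow> nat) \<Rightarrow> 'a set \<Rightarrow> ('f \<Rightarrow> 'a list \<Rightarrow> 'a) \<Rightarrow> 'a rel \<Rightarrow> bool" where
  "congruence ar A F \<theta> \<longleftrightarrow> equiv A \<theta> \<and>
     (\<forall>f xs ys. length xs = ar f \<and> length ys = ar f \<and>
        list_all2 (\<lambda>x y. (x, y) \<in> \<theta>) xs ys \<longrightarrow> (F f xs, F f ys) \<in> \<theta>)"

text \<open>X \<circ>_m Y = X \<circ> Y \<circ> X \<circ> ... with m factors (m \<ge> 1); value for m = 0 is Id (unused).\<close>
fun alt_comp :: "'a rel \<Rightarrow> 'a rel \<Rightarrow> nat \<Rightarrow> 'a rel" where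
  "alt_comp X Y 0 = Id"
| "alt_comp X Y (Suc 0) = X"
| "alt_comp X Y (Suc (Suc m)) = X O alt_comp Y X (Suc m)"

text \<open>A_l(\<alpha>,\<beta>,\<gamma>) for l \<ge> 1; the value at l = 0 is irrelevant (set to {}).\<close>
fun Arel :: "nat \<Rightarrow> 'a rel \<Rightarrow> 'a rel \<Rightarrow> 'a rel \<Rightarrow> 'a rel" where
  "Arel 0 \<alpha> \<beta> \<gamma> = {}"
| "Arel (Suc 0) \<alpha> \<beta> \<gamma> = \<alpha> \<inter> (\<beta> O (\<alpha> \<inter> \<gamma>) O \<beta>)"
| "Arel (Suc (Suc l)) \<alpha> \<beta> \<gamma> = \<alpha> \<inter> (\<beta> O Arel (Suc l) \<alpha> \<gamma> \<beta> O \<beta>)"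

definition modular3_alg :: "('f \<Rightarrow> nat) \<Rightarrow> 'a set \<Rightarrow> ('f \<Rightarrow> 'a list \<Rightarrow> 'a) \<Rightarrow> nat \<Rightarrow> bool" where
  "modular3_alg ar A F k \<longleftrightarrow> (\<forall>\<alpha> \<beta> \<gamma>. congruence ar A F \<alpha> \<and> congruence ar A F \<beta> \<and> congruence ar A F \<gamma> \<longrightarrow>
      \<alpha> \<inter> (\<beta> O (\<alpha> \<inter> \<gamma>) O \<beta>) \<subseteq> alt_comp (\<alpha> \<inter> \<beta>) (\<alpha> \<inter> \<gamma>) k)"

end

theory Submission
  imports Defs
begin

text \<open>
  Applying (3,2r)-modularity in the algebra of term functions of A to the generators
  x, y, z, w and the kernels of the substitutions (x = w, y = z), (x = y, z = w) and (y = z)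
  yields Day operations m_0, ..., m_2r: m_0 and m_2r are the first and last projections,
  m_i(x,y,y,x) = x, and m_i agrees with m_(i+1) on (x,x,w,w) for even i and on (x,y,y,w)
  for odd i.

  With A_0(\<alpha>,\<beta>,\<gamma>) = \<alpha>\<beta>, induct on l. Let x \<beta> y, (y,z) \<in> A_l(\<alpha>,\<gamma>,\<beta>), z \<beta> w and x \<alpha> w.
  Then m_2j(x,y,z,w) and m_(2j+1)(x,y,z,w) are \<alpha>\<beta>-related. The elements m_(2j+1)(x,y,z,w)
  and m_(2j+2)(x,y,z,w) are the values at (y,z) of two binary polynomials agreeing on the
  diagonal; such values remain A_l(\<alpha>,\<gamma>,\<beta>)-related once they are \<alpha>-related, so by
  induction they are joined by r^l blocks \<alpha>\<beta> \<circ> \<alpha>\<gamma>, into which the preceding \<alpha>\<beta>-step is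
  absorbed. Concatenating the r segments gives r^(l+1) blocks from x to w.
\<close>

fun subst_trm :: "('v \<Rightarrow> ('f, 'w) trm) \<Rightarrow> ('f, 'v) trm \<Rightarrow> ('f, 'w) trm" where
  "subst_trm \<tau> (Var v) = \<tau> v"
| "subst_trm \<tau> (Fn f ts) = Fn f (map (subst_trm \<tau>) ts)"

lemma eval_subst_trm:
  "eval_trm F \<sigma> (subst_trm \<tau> t) = eval_trm F (\<lambda>v. eval_trm F \<sigma> (\<tau> v)) t"
  by (induction t) (simp_all add: o_def cong: map_cong)

lemma eval_trm_closed:
  assumes "algebra ar A F" and "range \<sigma> \<subseteq> A"
  shows "wf_trm ar t \<Longrightarrow> eval_trm F \<sigma> t \<in> A"
proof (induction t)
  case (Fn f ts)
  then have "set (map (eval_trm F \<sigma>) ts) \<subseteq> A" "length (map (eval_trm F \<sigma>) ts) = ar f"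
    by auto
  with assms(1) show ?case
    unfolding algebra_def by simp
qed (use assms(2) in auto)

lemma congruence_in_carrier: "congruence ar A F \<theta> \<Longrightarrow> (a, b) \<in> \<theta> \<Longrightarrow> a \<in> A \<and> b \<in> A"
  unfolding congruence_def equiv_def refl_on_def by auto

lemma congruence_refl: "congruence ar A F \<theta> \<Longrightarrow> a \<in> A \<Longrightarrow> (a, a) \<in> \<theta>"
  unfolding congruence_def equiv_def refl_on_def by auto

lemma congruence_sym: "congruence ar A F \<theta> \<Longrightarrow> sym \<theta>"
  unfolding congruence_def equiv_def by auto

lemma congruence_trans: "congruence ar A F \<theta> \<Longrightarrow> trans \<theta>"
  unfolding congruence_def equiv_def by auto

lemma congruence_symD: "congruence ar A F \<theta> \<Longrightarrow> (a, b) \<in> \<theta> \<Longrightarrow> (b, a) \<in> \<theta>"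
  by (metis congruence_sym symD)

lemma congruence_transD:
  "congruence ar A F \<theta> \<Longrightarrow> (a, b) \<in> \<theta> \<Longrightarrow> (b, c) \<in> \<theta> \<Longrightarrow> (a, c) \<in> \<theta>"
  by (metis congruence_trans transD)

lemma congruence_eval_trm:
  assumes "congruence ar A F \<theta>" and "\<And>v. (\<sigma> v, \<sigma>' v) \<in> \<theta>"
  shows "wf_trm ar t \<Longrightarrow> (eval_trm F \<sigma> t, eval_trm F \<sigma>' t) \<in> \<theta>"
proof (induction t)
  case (Fn f ts)
  then have "list_all2 (\<lambda>x y. (x, y) \<in> \<theta>) (map (eval_trm F \<sigma>) ts) (map (eval_trm F \<sigma>') ts)"
    by (auto simp: list_all2_conv_all_nth)
  with Fn.prems assms(1) show ?case
    unfolding congruence_def by auto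
qed (use assms(2) in auto)

text \<open>
  Each term function is
  represented by a canonical well-formed term chosen with SOME, so the carrier has the term
  type over which the modularity hypothesis quantifies.
\<close>

definition same_term_fun ::
    "'a set \<Rightarrow> ('f \<Rightarrow> 'a list \<Rightarrow> 'a) \<Rightarrow> ('f, nat) trm \<Rightarrow> ('f, nat) trm \<Rightarrow> bool" where
  "same_term_fun A F s t \<longleftrightarrow> (\<forall>\<sigma>. range \<sigma> \<subseteq> A \<longrightarrow> eval_trm F \<sigma> s = eval_trm F \<sigma> t)"

definition canon_trm ::
    "('f \<Rightarrow> nat) \<Rightarrow> 'a set \<Rightarrow> ('f \<Rightarrow> 'a list \<Rightarrow> 'a) \<Rightarrow> ('f, nat) trm \<Rightarrow> ('f, nat) trm" where
  "canon_trm ar A F t = (SOME s. wf_trm ar s \<and> same_term_fun A F s t)"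

definition term_fun_carrier :: "('f \<Rightarrow> nat) \<Rightarrow> 'a set \<Rightarrow> ('f \<Rightarrow> 'a list \<Rightarrow> 'a) \<Rightarrow> ('f, nat) trm set" where
  "term_fun_carrier ar A F = canon_trm ar A F ` {t. wf_trm ar t}"

definition term_fun_op ::
    "('f \<Rightarrow> nat) \<Rightarrow> 'a set \<Rightarrow> ('f \<Rightarrow> 'a list \<Rightarrow> 'a) \<Rightarrow> 'f \<Rightarrow> ('f, nat) trm list \<Rightarrow> ('f, nat) trm" where
  "term_fun_op ar A F f ts = canon_trm ar A F (Fn f ts)"

definition term_fun_kernel ::
    "('f \<Rightarrow> nat) \<Rightarrow> 'a set \<Rightarrow> ('f \<Rightarrow> 'a list \<Rightarrow> 'a) \<Rightarrow> ((nat \<Rightarrow> 'a) \<Rightarrow> bool) \<Rightarrow> ('f, nat) trm rel" where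
  "term_fun_kernel ar A F P = {(s, t). s \<in> term_fun_carrier ar A F \<and> t \<in> term_fun_carrier ar A F \<and>
     (\<forall>\<sigma>. range \<sigma> \<subseteq> A \<and> P \<sigma> \<longrightarrow> eval_trm F \<sigma> s = eval_trm F \<sigma> t)}"

lemma canon_trm_spec:
  "wf_trm ar t \<Longrightarrow> wf_trm ar (canon_trm ar A F t) \<and> same_term_fun A F (canon_trm ar A F t) t"
  unfolding canon_trm_def by (rule someI[of _ t]) (simp add: same_term_fun_def)

lemma eval_canon_trm:
  "wf_trm ar t \<Longrightarrow> range \<sigma> \<subseteq> A \<Longrightarrow> eval_trm F \<sigma> (canon_trm ar A F t) = eval_trm F \<sigma> t"
  using canon_trm_spec unfolding same_term_fun_def by blast

lemma canon_trm_cong: "same_term_fun A F s t \<Longrightarrow> canon_trm ar A F s = canon_trm ar A F t"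
  unfolding canon_trm_def same_term_fun_def by metis

lemma canon_trm_in_carrier: "wf_trm ar t \<Longrightarrow> canon_trm ar A F t \<in> term_fun_carrier ar A F"
  unfolding term_fun_carrier_def by blast

lemma term_fun_carrier_wf: "s \<in> term_fun_carrier ar A F \<Longrightarrow> wf_trm ar s"
  unfolding term_fun_carrier_def using canon_trm_spec by blast

lemma canon_trm_carrier: "s \<in> term_fun_carrier ar A F \<Longrightarrow> canon_trm ar A F s = s"
  unfolding term_fun_carrier_def using canon_trm_spec canon_trm_cong by blast

lemma term_fun_carrier_eqI:
  "s \<in> term_fun_carrier ar A F \<Longrightarrow> t \<in> term_fun_carrier ar A F \<Longrightarrow> same_term_fun A F s t \<Longrightarrow> s = t"
  by (metis canon_trm_carrier canon_trm_cong)

lemma wf_trm_Fn_carrier: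
  "length xs = ar f \<Longrightarrow> set xs \<subseteq> term_fun_carrier ar A F \<Longrightarrow> wf_trm ar (Fn f xs)"
  by (auto intro: term_fun_carrier_wf)

lemma eval_term_fun_op:
  assumes "range \<tau> \<subseteq> term_fun_carrier ar A F"
  shows "wf_trm ar s \<Longrightarrow> eval_trm (term_fun_op ar A F) \<tau> s \<in> term_fun_carrier ar A F \<and>
    same_term_fun A F (eval_trm (term_fun_op ar A F) \<tau> s) (subst_trm \<tau> s)"
proof (induction s)
  case (Var x)
  with assms show ?case by (auto simp: same_term_fun_def)
next
  case (Fn f ts)
  define xs where "xs = map (eval_trm (term_fun_op ar A F) \<tau>) ts"
  have IH: "t \<in> set ts \<Longrightarrow> eval_trm (term_fun_op ar A F) \<tau> t \<in> term_fun_carrier ar A F \<and>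
      same_term_fun A F (eval_trm (term_fun_op ar A F) \<tau> t) (subst_trm \<tau> t)" for t
    using Fn by auto
  have "set xs \<subseteq> term_fun_carrier ar A F" "length xs = ar f"
    using Fn.prems IH unfolding xs_def by auto
  then have wf: "wf_trm ar (Fn f xs)"
    by (intro wf_trm_Fn_carrier)
  have "same_term_fun A F (Fn f xs) (subst_trm \<tau> (Fn f ts))"
    using IH unfolding same_term_fun_def xs_def by (auto cong: map_cong)
  with eval_canon_trm[OF wf, of _ A F]
  have "same_term_fun A F (term_fun_op ar A F f xs) (subst_trm \<tau> (Fn f ts))"
    unfolding term_fun_op_def same_term_fun_def by auto
  with canon_trm_in_carrier[OF wf] show ?case
    unfolding xs_def term_fun_op_def by simp
qed

lemma term_fun_in_variety:
  assumes wf: "\<forall>(s, t)\<in>\<Sigma>. wf_trm ar s \<and> wf_trm ar t" and alg: "in_variety ar \<Sigma> A F"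
  shows "in_variety ar \<Sigma> (term_fun_carrier ar A F) (term_fun_op ar A F)"
  unfolding in_variety_def
proof
  show "algebra ar (term_fun_carrier ar A F) (term_fun_op ar A F)"
    unfolding algebra_def term_fun_op_def
    by (auto intro!: canon_trm_in_carrier wf_trm_Fn_carrier)
next
  have "eval_trm (term_fun_op ar A F) \<tau> s = eval_trm (term_fun_op ar A F) \<tau> t"
    if st: "(s, t) \<in> \<Sigma>" and \<tau>: "range \<tau> \<subseteq> term_fun_carrier ar A F" for s t \<tau>
  proof -
    have "eval_trm F \<sigma> (subst_trm \<tau> s) = eval_trm F \<sigma> (subst_trm \<tau> t)" if "range \<sigma> \<subseteq> A" for \<sigma>
    proof -
      have "range (\<lambda>v. eval_trm F \<sigma> (\<tau> v)) \<subseteq> A"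
        using eval_trm_closed[of ar A F \<sigma>] alg that \<tau> term_fun_carrier_wf
        unfolding in_variety_def by blast
      with alg st show ?thesis
        unfolding eval_subst_trm in_variety_def satisfies_def by auto
    qed
    then show ?thesis
      using wf st eval_term_fun_op[OF \<tau>, of s] eval_term_fun_op[OF \<tau>, of t]
      by (intro term_fun_carrier_eqI) (auto simp: same_term_fun_def)
  qed
  then show "satisfies (term_fun_carrier ar A F) (term_fun_op ar A F) \<Sigma>"
    unfolding satisfies_def by auto
qed

lemma term_fun_kernel_congruence:
  "congruence ar (term_fun_carrier ar A F) (term_fun_op ar A F) (term_fun_kernel ar A F P)"
  unfolding congruence_def
proof (intro conjI allI impI)
  show "equiv (term_fun_carrier ar A F) (term_fun_kernel ar A F P)"
    unfolding equiv_def refl_on_def sym_def trans_def term_fun_kernel_def by auto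
next
  fix f xs ys
  assume "length xs = ar f \<and> length ys = ar f \<and> list_all2 (\<lambda>x y. (x, y) \<in> term_fun_kernel ar A F P) xs ys"
  then have len: "length xs = ar f" "length ys = ar f"
    and rel: "\<And>i. i < ar f \<Longrightarrow> (xs ! i, ys ! i) \<in> term_fun_kernel ar A F P"
    by (auto simp: list_all2_conv_all_nth)
  then have "set xs \<subseteq> term_fun_carrier ar A F" "set ys \<subseteq> term_fun_carrier ar A F"
    unfolding term_fun_kernel_def by (auto simp: in_set_conv_nth)
  with len have wf: "wf_trm ar (Fn f xs)" "wf_trm ar (Fn f ys)"
    by (metis wf_trm_Fn_carrier)+
  have "eval_trm F \<sigma> (Fn f xs) = eval_trm F \<sigma> (Fn f ys)" if "range \<sigma> \<subseteq> A" "P \<sigma>" for \<sigma>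
  proof -
    have "map (eval_trm F \<sigma>) xs = map (eval_trm F \<sigma>) ys"
      using len rel that unfolding term_fun_kernel_def by (auto intro: nth_equalityI)
    then show ?thesis by simp
  qed
  then show "(term_fun_op ar A F f xs, term_fun_op ar A F f ys) \<in> term_fun_kernel ar A F P"
    unfolding term_fun_kernel_def term_fun_op_def
    using wf by (simp add: canon_trm_in_carrier eval_canon_trm)
qed

lemma term_fun_kernelD:
  "(s, t) \<in> term_fun_kernel ar A F P \<Longrightarrow> range \<sigma> \<subseteq> A \<Longrightarrow> P \<sigma> \<Longrightarrow> eval_trm F \<sigma> s = eval_trm F \<sigma> t"
  unfolding term_fun_kernel_def by blast

lemma alt_comp_chain:
  "(p, q) \<in> alt_comp X Y n \<Longrightarrow>
    \<exists>e. e 0 = p \<and> e n = q \<and> (\<forall>i<n. (e i, e (Suc i)) \<in> (if even i then X else Y))"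
proof (induction X Y n arbitrary: p rule: alt_comp.induct)
  case (1 X Y)
  then show ?case by (intro exI[of _ "\<lambda>_. p"]) auto
next
  case (2 X Y)
  then show ?case by (intro exI[of _ "\<lambda>i. if i = 0 then p else q"]) auto
next
  case (3 X Y m)
  then obtain p' where pp': "(p, p') \<in> X" and p'q: "(p', q) \<in> alt_comp Y X (Suc m)"
    by auto
  from 3(1)[OF p'q] obtain e where e: "e 0 = p'" "e (Suc m) = q"
    and chain: "\<forall>i<Suc m. (e i, e (Suc i)) \<in> (if even i then Y else X)"
    by blast
  define e' where "e' i = (case i of 0 \<Rightarrow> p | Suc k \<Rightarrow> e k)" for i
  have "(e' i, e' (Suc i)) \<in> (if even i then X else Y)" if "i < Suc (Suc m)" for i
  proof (cases i)
    case 0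
    with pp' e(1) show ?thesis
      by (simp add: e'_def)
  next
    case (Suc k)
    with chain that have "(e k, e (Suc k)) \<in> (if even k then Y else X)"
      by simp
    with Suc show ?thesis
      by (simp add: e'_def split: if_splits)
  qed
  with e(2) show ?case
    by (intro exI[of _ e']) (simp add: e'_def)
qed

lemma alt_comp_even_eq_relpow: "alt_comp X Y (2 * n) = (X O Y) ^^ n"
proof (induction n)
  case (Suc n)
  have "alt_comp X Y (2 * Suc n) = X O Y O alt_comp X Y (2 * n)"
    by (cases n) (auto simp: numeral_2_eq_2)
  also have "\<dots> = (X O Y) ^^ Suc n"
    by (simp add: Suc relpow_commute[of "X O Y", symmetric] O_assoc)
  finally show ?case .
qed simp

lemma converse_relpow: "((R :: 'a rel) ^^ n)\<inverse> = (R\<inverse>) ^^ n"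
proof (induction n)
  case (Suc n)
  then show ?case
    by (simp add: converse_relcomp relpow_commute[of "R\<inverse>"])
qed simp

lemma converse_relpow_relcomp_sym:
  fixes R S :: "'a rel"
  assumes "sym R" and "sym S"
  shows "((S O R) ^^ n)\<inverse> = (R O S) ^^ n"
  using assms by (simp add: converse_relpow converse_relcomp sym_conv_converse_eq)

lemma relcomp_relpow_absorb:
  fixes R S :: "'a rel"
  assumes "trans R" and "n > 0"
  shows "R O (R O S) ^^ n \<subseteq> (R O S) ^^ n"
proof -
  obtain k where n: "n = Suc k"
    using assms(2) by (cases n) auto
  have "R O (R O S) ^^ n = (R O R) O S O (R O S) ^^ k"
    unfolding n by (simp add: relpow_commute[symmetric] O_assoc)
  also have "\<dots> \<subseteq> R O S O (R O S) ^^ k"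
    using trans_O_subset[OF assms(1)] by (intro relcomp_mono) auto
  also have "\<dots> = (R O S) ^^ n"
    unfolding n by (simp add: relpow_commute[symmetric] O_assoc)
  finally show ?thesis .
qed

lemma relpow_chain_mult:
  "(\<And>j. j < k \<Longrightarrow> (f j, f (Suc j)) \<in> R ^^ N) \<Longrightarrow> (f 0, f k) \<in> R ^^ (N * k)"
proof (induction k)
  case (Suc k)
  then have "(f 0, f (Suc k)) \<in> R ^^ (N * k + N)"
    by (intro relpow_trans[of _ "f k"]) auto
  then show ?case
    by (simp add: add.commute)
qed simp

text \<open>A_l with the base case A_0(\<alpha>,\<beta>,\<gamma>) = \<alpha>\<beta>, which makes the recursion uniform.\<close>

fun Arel_ext :: "nat \<Rightarrow> 'a rel \<Rightarrow> 'a rel \<Rightarrow> 'a rel \<Rightarrow> 'a rel" where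
  "Arel_ext 0 \<alpha> \<beta> \<gamma> = \<alpha> \<inter> \<beta>"
| "Arel_ext (Suc l) \<alpha> \<beta> \<gamma> = \<alpha> \<inter> (\<beta> O Arel_ext l \<alpha> \<gamma> \<beta> O \<beta>)"

lemma Arel_subset_Arel_ext: "Arel l \<alpha> \<beta> \<gamma> \<subseteq> Arel_ext l \<alpha> \<beta> \<gamma>"
  by (induction l \<alpha> \<beta> \<gamma> rule: Arel.induct) fastforce+

lemma Arel_ext_subset: "Arel_ext l \<alpha> \<beta> \<gamma> \<subseteq> \<alpha>"
  by (cases l) auto

lemma compatible_diagonal_related:
  assumes compat: "\<And>\<theta> a b a' b'. congruence ar A F \<theta> \<Longrightarrow> (a, a') \<in> \<theta> \<Longrightarrow> (b, b') \<in> \<theta> \<Longrightarrow>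
      (f a b, f a' b') \<in> \<theta> \<and> (g a b, g a' b') \<in> \<theta>"
    and diag: "\<And>a. a \<in> A \<Longrightarrow> f a a = g a a"
    and \<theta>: "congruence ar A F \<theta>" and uv: "(u, v) \<in> \<theta>"
  shows "(f u v, g u v) \<in> \<theta>"
proof -
  have u: "u \<in> A"
    using congruence_in_carrier[OF \<theta> uv] by blast
  have "(f u v, f u u) \<in> \<theta>"
    using compat[OF \<theta> congruence_refl[OF \<theta> u] congruence_symD[OF \<theta> uv]] by blast
  moreover have "(g u u, g u v) \<in> \<theta>"
    using compat[OF \<theta> congruence_refl[OF \<theta> u] uv] by blast
  ultimately show ?thesis
    unfolding diag[OF u] using congruence_transD[OF \<theta>] by blast
qed

lemma compatible_diagonal_Arel_ext:
  assumes compat: "\<And>\<theta> a b a' b'. congruence ar A F \<theta> \<Longrightarrow> (a, a') \<in> \<theta> \<Longrightarrow> (b, b') \<in> \<theta> \<Longrightarrow>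
      (f a b, f a' b') \<in> \<theta> \<and> (g a b, g a' b') \<in> \<theta>"
    and diag: "\<And>a. a \<in> A \<Longrightarrow> f a a = g a a"
    and \<alpha>: "congruence ar A F \<alpha>"
  shows "congruence ar A F \<beta> \<Longrightarrow> congruence ar A F \<gamma> \<Longrightarrow> (u, v) \<in> Arel_ext j \<alpha> \<beta> \<gamma> \<Longrightarrow>
    (f u v, g u v) \<in> \<alpha> \<Longrightarrow> (f u v, g u v) \<in> Arel_ext j \<alpha> \<beta> \<gamma>"
proof (induction j arbitrary: \<beta> \<gamma> u v)
  case 0
  then have "(f u v, g u v) \<in> \<beta>"
    using compatible_diagonal_related[where f = f and g = g, OF compat diag 0(1)] by simp
  with 0 show ?case
    by simp
next
  case (Suc j)
  note \<beta> = Suc.prems(1)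
  from Suc.prems(3) obtain u' v' where uu': "(u, u') \<in> \<beta>" and u'v': "(u', v') \<in> Arel_ext j \<alpha> \<gamma> \<beta>"
    and v'v: "(v', v) \<in> \<beta>"
    by auto
  have "(f u' v', g u' v') \<in> \<alpha>"
    using compatible_diagonal_related[where f = f and g = g, OF compat diag \<alpha>] u'v' Arel_ext_subset
    by blast
  then have "(f u' v', g u' v') \<in> Arel_ext j \<alpha> \<gamma> \<beta>"
    using Suc.IH[OF Suc.prems(2,1) u'v'] by blast
  moreover have "(f u v, f u' v') \<in> \<beta>" "(g u' v', g u v) \<in> \<beta>"
    using compat[OF \<beta> uu' congruence_symD[OF \<beta> v'v]] compat[OF \<beta> congruence_symD[OF \<beta> uu'] v'v]
    by blast+
  ultimately show ?case
    using Suc.prems(4) by (simp add: relcompI)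
qed

locale day_operations =
  fixes ar :: "'f \<Rightarrow> nat" and A :: "'a set" and F :: "'f \<Rightarrow> 'a list \<Rightarrow> 'a"
    and r :: nat and m :: "nat \<Rightarrow> 'a \<Rightarrow> 'a \<Rightarrow> 'a \<Rightarrow> 'a \<Rightarrow> 'a"
  assumes m_compatible: "\<And>i \<theta> a b c d a' b' c' d'. i \<le> 2 * r \<Longrightarrow> congruence ar A F \<theta> \<Longrightarrow>
      (a, a') \<in> \<theta> \<Longrightarrow> (b, b') \<in> \<theta> \<Longrightarrow> (c, c') \<in> \<theta> \<Longrightarrow> (d, d') \<in> \<theta> \<Longrightarrow>
      (m i a b c d, m i a' b' c' d') \<in> \<theta>"
    and m_first: "\<And>a b c d. a \<in> A \<Longrightarrow> b \<in> A \<Longrightarrow> c \<in> A \<Longrightarrow> d \<in> A \<Longrightarrow> m 0 a b c d = a"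
    and m_last: "\<And>a b c d. a \<in> A \<Longrightarrow> b \<in> A \<Longrightarrow> c \<in> A \<Longrightarrow> d \<in> A \<Longrightarrow> m (2 * r) a b c d = d"
    and m_absorb: "\<And>i a b. i \<le> 2 * r \<Longrightarrow> a \<in> A \<Longrightarrow> b \<in> A \<Longrightarrow> m i a b b a = a"
    and m_even: "\<And>i a d. i < 2 * r \<Longrightarrow> even i \<Longrightarrow> a \<in> A \<Longrightarrow> d \<in> A \<Longrightarrow>
      m i a a d d = m (Suc i) a a d d"
    and m_odd: "\<And>i a b d. i < 2 * r \<Longrightarrow> odd i \<Longrightarrow> a \<in> A \<Longrightarrow> b \<in> A \<Longrightarrow> d \<in> A \<Longrightarrow>
      m i a b b d = m (Suc i) a b b d"
begin

lemma m_related_first: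
  assumes \<alpha>: "congruence ar A F \<alpha>" and xw: "(x, w) \<in> \<alpha>" and yz: "(y, z) \<in> \<alpha>" and i: "i \<le> 2 * r"
  shows "(m i x y z w, x) \<in> \<alpha>"
proof -
  have x: "x \<in> A" and y: "y \<in> A"
    using congruence_in_carrier[OF \<alpha>] xw yz by blast+
  have "(m i x y z w, m i x y y x) \<in> \<alpha>"
    using m_compatible[OF i \<alpha> congruence_refl[OF \<alpha> x] congruence_refl[OF \<alpha> y]
        congruence_symD[OF \<alpha> yz] congruence_symD[OF \<alpha> xw]] .
  then show ?thesis
    using m_absorb[OF i x y] by simp
qed

lemma m_double_step:
  assumes \<alpha>: "congruence ar A F \<alpha>" and \<beta>: "congruence ar A F \<beta>" and \<gamma>: "congruence ar A F \<gamma>"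
    and IH: "Arel_ext l \<alpha> \<gamma> \<beta> \<subseteq> ((\<alpha> \<inter> \<gamma>) O (\<alpha> \<inter> \<beta>)) ^^ N" and "0 < N"
    and xw: "(x, w) \<in> \<alpha>" and xy: "(x, y) \<in> \<beta>" and yz: "(y, z) \<in> Arel_ext l \<alpha> \<gamma> \<beta>"
    and zw: "(z, w) \<in> \<beta>"
    and j: "j < r"
  shows "(m (2 * j) x y z w, m (2 * j + 2) x y z w) \<in> ((\<alpha> \<inter> \<beta>) O (\<alpha> \<inter> \<gamma>)) ^^ N"
proof -
  let ?m = "\<lambda>i. m i x y z w"
  have x: "x \<in> A" and w: "w \<in> A"
    using congruence_in_carrier[OF \<alpha> xw] by blast+
  have related_x: "(?m i, x) \<in> \<alpha>" if "i \<le> 2 * r" for i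
    using m_related_first[OF \<alpha> xw _ that] yz Arel_ext_subset by blast
  have related_\<alpha>: "(?m i, ?m i') \<in> \<alpha>" if "i \<le> 2 * r" "i' \<le> 2 * r" for i i'
    using congruence_transD[OF \<alpha> related_x[OF that(1)] congruence_symD[OF \<alpha> related_x[OF that(2)]]] .
  have "(?m (2 * j), ?m (2 * j + 1)) \<in> \<alpha>"
    using related_\<alpha> j by simp
  moreover have "(?m (2 * j), ?m (2 * j + 1)) \<in> \<beta>"
  proof -
    have "(?m (2 * j), m (2 * j) x x w w) \<in> \<beta>" "(m (2 * j + 1) x x w w, ?m (2 * j + 1)) \<in> \<beta>"
      using m_compatible[OF _ \<beta> congruence_refl[OF \<beta> x] congruence_symD[OF \<beta> xy] zw
          congruence_refl[OF \<beta> w]]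
        m_compatible[OF _ \<beta> congruence_refl[OF \<beta> x] xy congruence_symD[OF \<beta> zw]
          congruence_refl[OF \<beta> w]] j
      by simp_all
    moreover have "m (2 * j) x x w w = m (2 * j + 1) x x w w"
      using m_even[of "2 * j" x w] j x w by simp
    ultimately show ?thesis
      using congruence_transD[OF \<beta>] by auto
  qed
  moreover have "(?m (2 * j + 2), ?m (2 * j + 1)) \<in> Arel_ext l \<alpha> \<gamma> \<beta>"
  proof (rule compatible_diagonal_Arel_ext[where f = "\<lambda>b c. m (2 * j + 2) x b c w"
        and g = "\<lambda>b c. m (2 * j + 1) x b c w", OF _ _ \<alpha> \<gamma> \<beta> yz])
    fix \<theta> a b a' b'
    assume \<theta>: "congruence ar A F \<theta>" and "(a, a') \<in> \<theta>" "(b, b') \<in> \<theta>"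
    with j x w show "(m (2 * j + 2) x a b w, m (2 * j + 2) x a' b' w) \<in> \<theta> \<and>
        (m (2 * j + 1) x a b w, m (2 * j + 1) x a' b' w) \<in> \<theta>"
      by (simp add: m_compatible congruence_refl)
  next
    fix a
    assume "a \<in> A"
    with j x w show "m (2 * j + 2) x a a w = m (2 * j + 1) x a a w"
      using m_odd[of "2 * j + 1" x a w] by simp
  next
    show "(?m (2 * j + 2), ?m (2 * j + 1)) \<in> \<alpha>"
      using related_\<alpha> j by simp
  qed
  with IH have "(?m (2 * j + 1), ?m (2 * j + 2)) \<in> ((\<alpha> \<inter> \<beta>) O (\<alpha> \<inter> \<gamma>)) ^^ N"
    using converse_relpow_relcomp_sym[of "\<alpha> \<inter> \<beta>" "\<alpha> \<inter> \<gamma>" N]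
      sym_Int congruence_sym[OF \<alpha>] congruence_sym[OF \<beta>] congruence_sym[OF \<gamma>] by blast
  ultimately show ?thesis
    using relcomp_relpow_absorb[OF trans_Int[OF congruence_trans[OF \<alpha>] congruence_trans[OF \<beta>]] \<open>0 < N\<close>]
    by blast
qed

lemma Arel_ext_subset_relpow:
  "congruence ar A F \<alpha> \<Longrightarrow> congruence ar A F \<beta> \<Longrightarrow> congruence ar A F \<gamma> \<Longrightarrow>
    Arel_ext l \<alpha> \<beta> \<gamma> \<subseteq> ((\<alpha> \<inter> \<beta>) O (\<alpha> \<inter> \<gamma>)) ^^ (r ^ l)"
proof (induction l arbitrary: \<beta> \<gamma>)
  case 0
  show ?case
  proof clarify
    fix a b
    assume "(a, b) \<in> Arel_ext 0 \<alpha> \<beta> \<gamma>"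
    then have ab: "(a, b) \<in> \<alpha> \<inter> \<beta>"
      by simp
    then have "b \<in> A"
      using congruence_in_carrier[OF 0(1)] by blast
    then have "(b, b) \<in> \<alpha> \<inter> \<gamma>"
      using congruence_refl[OF 0(1)] congruence_refl[OF 0(3)] by blast
    with ab show "(a, b) \<in> ((\<alpha> \<inter> \<beta>) O (\<alpha> \<inter> \<gamma>)) ^^ (r ^ 0)"
      by auto
  qed
next
  case (Suc l)
  show ?case
  proof clarify
    fix x w
    assume "(x, w) \<in> Arel_ext (Suc l) \<alpha> \<beta> \<gamma>"
    then obtain y z where xw: "(x, w) \<in> \<alpha>" and xy: "(x, y) \<in> \<beta>"
      and yz: "(y, z) \<in> Arel_ext l \<alpha> \<gamma> \<beta>" and zw: "(z, w) \<in> \<beta>"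
      by auto
    have "(m (2 * j) x y z w, m (2 * Suc j) x y z w) \<in> ((\<alpha> \<inter> \<beta>) O (\<alpha> \<inter> \<gamma>)) ^^ (r ^ l)"
      if "j < r" for j
    proof -
      from that have "0 < r ^ l"
        by simp
      from m_double_step[OF Suc.prems Suc.IH[OF Suc.prems(1,3,2)] this xw xy yz zw that] show ?thesis
        by (simp add: numeral_2_eq_2)
    qed
    then have "(m (2 * 0) x y z w, m (2 * r) x y z w) \<in> ((\<alpha> \<inter> \<beta>) O (\<alpha> \<inter> \<gamma>)) ^^ (r ^ l * r)"
      by (rule relpow_chain_mult[where f = "\<lambda>j. m (2 * j) x y z w"])
    moreover have "x \<in> A" "y \<in> A" "z \<in> A" "w \<in> A"
      using congruence_in_carrier[OF Suc.prems(2)] xy zw by blast+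
    ultimately show "(x, w) \<in> ((\<alpha> \<inter> \<beta>) O (\<alpha> \<inter> \<gamma>)) ^^ (r ^ Suc l)"
      by (simp add: m_first m_last mult.commute[of "r ^ l"])
  qed
qed

end

definition assign4 :: "'a \<Rightarrow> 'a \<Rightarrow> 'a \<Rightarrow> 'a \<Rightarrow> nat \<Rightarrow> 'a" where
  "assign4 a b c d n = (if n = 0 then a else if n = 1 then b else if n = 2 then c else d)"

lemma assign4_simps [simp]:
  "assign4 a b c d 0 = a" "assign4 a b c d (Suc 0) = b" "assign4 a b c d 2 = c" "assign4 a b c d 3 = d"
  by (simp_all add: assign4_def)

lemma range_assign4: "a \<in> A \<Longrightarrow> b \<in> A \<Longrightarrow> c \<in> A \<Longrightarrow> d \<in> A \<Longrightarrow> range (assign4 a b c d) \<subseteq> A"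
  unfolding assign4_def by auto

text \<open>Day terms in the variables 0, 1, 2, 3 (standing for x, y, z, w), as identities of A.\<close>

locale day_terms =
  fixes ar :: "'f \<Rightarrow> nat" and A :: "'a set" and F :: "'f \<Rightarrow> 'a list \<Rightarrow> 'a"
    and r :: nat and e :: "nat \<Rightarrow> ('f, nat) trm"
  assumes e_wf: "\<And>i. i \<le> 2 * r \<Longrightarrow> wf_trm ar (e i)"
    and e_first: "\<And>\<sigma>. range \<sigma> \<subseteq> A \<Longrightarrow> eval_trm F \<sigma> (e 0) = \<sigma> 0"
    and e_last: "\<And>\<sigma>. range \<sigma> \<subseteq> A \<Longrightarrow> eval_trm F \<sigma> (e (2 * r)) = \<sigma> 3"
    and e_absorb: "\<And>\<sigma> i. range \<sigma> \<subseteq> A \<Longrightarrow> \<sigma> 0 = \<sigma> 3 \<Longrightarrow> \<sigma> 1 = \<sigma> 2 \<Longrightarrow> i \<le> 2 * r \<Longrightarrow>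
      eval_trm F \<sigma> (e i) = \<sigma> 0"
    and e_even: "\<And>\<sigma> i. range \<sigma> \<subseteq> A \<Longrightarrow> \<sigma> 0 = \<sigma> 1 \<Longrightarrow> \<sigma> 2 = \<sigma> 3 \<Longrightarrow> i < 2 * r \<Longrightarrow> even i \<Longrightarrow>
      eval_trm F \<sigma> (e i) = eval_trm F \<sigma> (e (Suc i))"
    and e_odd: "\<And>\<sigma> i. range \<sigma> \<subseteq> A \<Longrightarrow> \<sigma> 1 = \<sigma> 2 \<Longrightarrow> i < 2 * r \<Longrightarrow> odd i \<Longrightarrow>
      eval_trm F \<sigma> (e i) = eval_trm F \<sigma> (e (Suc i))"

sublocale day_terms \<subseteq> day_operations ar A F r "\<lambda>i a b c d. eval_trm F (assign4 a b c d) (e i)"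
proof
  fix i \<theta> a b c d a' b' c' d'
  assume "i \<le> 2 * r" "congruence ar A F \<theta>"
    "(a, a') \<in> \<theta>" "(b, b') \<in> \<theta>" "(c, c') \<in> \<theta>" "(d, d') \<in> \<theta>"
  then show "(eval_trm F (assign4 a b c d) (e i), eval_trm F (assign4 a' b' c' d') (e i)) \<in> \<theta>"
    by (intro congruence_eval_trm) (auto simp: assign4_def intro: e_wf)
next
  fix a b c d
  assume "a \<in> A" "b \<in> A" "c \<in> A" "d \<in> A"
  then show "eval_trm F (assign4 a b c d) (e 0) = a" "eval_trm F (assign4 a b c d) (e (2 * r)) = d"
    by (simp_all add: e_first e_last range_assign4)
next
  fix i a b
  assume "i \<le> 2 * r" "a \<in> A" "b \<in> A"
  then show "eval_trm F (assign4 a b b a) (e i) = a"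
    using e_absorb[OF range_assign4[of a A b b a]] by simp
next
  fix i a d
  assume "i < 2 * r" "even i" "a \<in> A" "d \<in> A"
  then show "eval_trm F (assign4 a a d d) (e i) = eval_trm F (assign4 a a d d) (e (Suc i))"
    using e_even[OF range_assign4[of a A a d d]] by simp
next
  fix i a b d
  assume "i < 2 * r" "odd i" "a \<in> A" "b \<in> A" "d \<in> A"
  then show "eval_trm F (assign4 a b b d) (e i) = eval_trm F (assign4 a b b d) (e (Suc i))"
    using e_odd[OF range_assign4[of a A b b d]] by simp
qed

lemma day_terms_of_kernel_chain:
  fixes ar :: "'f \<Rightarrow> nat" and A :: "'a set" and F :: "'f \<Rightarrow> 'a list \<Rightarrow> 'a"
  defines "K\<alpha> \<equiv> term_fun_kernel ar A F (\<lambda>\<sigma>. \<sigma> 0 = \<sigma> 3 \<and> \<sigma> 1 = \<sigma> 2)"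
    and "K\<beta> \<equiv> term_fun_kernel ar A F (\<lambda>\<sigma>. \<sigma> 0 = \<sigma> 1 \<and> \<sigma> 2 = \<sigma> 3)"
    and "K\<gamma> \<equiv> term_fun_kernel ar A F (\<lambda>\<sigma>. \<sigma> 1 = \<sigma> 2)"
  assumes e0: "e 0 = canon_trm ar A F (Var 0)" and e2r: "e (2 * r) = canon_trm ar A F (Var 3)"
    and chain: "\<forall>i<2 * r. (e i, e (Suc i)) \<in> (if even i then K\<alpha> \<inter> K\<beta> else K\<alpha> \<inter> K\<gamma>)"
  shows "day_terms ar A F r e"
proof -
  have eval_var: "eval_trm F \<sigma> (canon_trm ar A F (Var n)) = \<sigma> n" if "range \<sigma> \<subseteq> A" for \<sigma> n
    using eval_canon_trm[of ar "Var n" \<sigma> A F] that by simp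
  have step: "(e i, e (Suc i)) \<in> K\<alpha>" "even i \<Longrightarrow> (e i, e (Suc i)) \<in> K\<beta>"
    "odd i \<Longrightarrow> (e i, e (Suc i)) \<in> K\<gamma>" if "i < 2 * r" for i
    using chain that by (auto split: if_splits)
  have K\<alpha>: "congruence ar (term_fun_carrier ar A F) (term_fun_op ar A F) K\<alpha>"
    unfolding K\<alpha>_def by (rule term_fun_kernel_congruence)
  have e_K\<alpha>: "(e 0, e i) \<in> K\<alpha>" if "i \<le> 2 * r" for i
    using that
  proof (induction i)
    case 0
    show ?case
      unfolding e0 by (simp add: congruence_refl[OF K\<alpha>] canon_trm_in_carrier)
  next
    case (Suc i)
    then have "(e i, e (Suc i)) \<in> K\<alpha>"
      using step by simp
    with Suc show ?case
      using congruence_transD[OF K\<alpha>] by auto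
  qed
  show ?thesis
  proof
    fix i
    assume "i \<le> 2 * r"
    with e_K\<alpha> have "e i \<in> term_fun_carrier ar A F"
      unfolding K\<alpha>_def term_fun_kernel_def by blast
    then show "wf_trm ar (e i)"
      by (rule term_fun_carrier_wf)
  next
    fix \<sigma> :: "nat \<Rightarrow> 'a"
    assume \<sigma>: "range \<sigma> \<subseteq> A"
    show "eval_trm F \<sigma> (e 0) = \<sigma> 0" "eval_trm F \<sigma> (e (2 * r)) = \<sigma> 3"
      unfolding e0 e2r by (rule eval_var[OF \<sigma>])+
  next
    fix \<sigma> :: "nat \<Rightarrow> 'a" and i
    assume \<sigma>: "range \<sigma> \<subseteq> A" and "\<sigma> 0 = \<sigma> 3" "\<sigma> 1 = \<sigma> 2" "i \<le> 2 * r"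
    then have "eval_trm F \<sigma> (e 0) = eval_trm F \<sigma> (e i)"
      using e_K\<alpha> unfolding K\<alpha>_def by (blast intro: term_fun_kernelD)
    then show "eval_trm F \<sigma> (e i) = \<sigma> 0"
      unfolding e0 eval_var[OF \<sigma>] by (rule sym)
  next
    fix \<sigma> :: "nat \<Rightarrow> 'a" and i
    assume "range \<sigma> \<subseteq> A" "\<sigma> 0 = \<sigma> 1" "\<sigma> 2 = \<sigma> 3" "i < 2 * r" "even i"
    then show "eval_trm F \<sigma> (e i) = eval_trm F \<sigma> (e (Suc i))"
      using step(2) unfolding K\<beta>_def by (blast intro: term_fun_kernelD)
  next
    fix \<sigma> :: "nat \<Rightarrow> 'a" and i
    assume "range \<sigma> \<subseteq> A" "\<sigma> 1 = \<sigma> 2" "i < 2 * r" "odd i"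
    then show "eval_trm F \<sigma> (e i) = eval_trm F \<sigma> (e (Suc i))"
      using step(3) unfolding K\<gamma>_def by (blast intro: term_fun_kernelD)
  qed
qed

lemma day_terms_exist:
  fixes A :: "'a set"
  assumes "modular3_alg ar (term_fun_carrier ar A F) (term_fun_op ar A F) (2 * r)"
  shows "\<exists>e. day_terms ar A F r e"
proof -
  define K\<alpha> where "K\<alpha> = term_fun_kernel ar A F (\<lambda>\<sigma>. \<sigma> 0 = \<sigma> 3 \<and> \<sigma> 1 = \<sigma> 2)"
  define K\<beta> where "K\<beta> = term_fun_kernel ar A F (\<lambda>\<sigma>. \<sigma> 0 = \<sigma> 1 \<and> \<sigma> 2 = \<sigma> 3)"
  define K\<gamma> where "K\<gamma> = term_fun_kernel ar A F (\<lambda>\<sigma>. \<sigma> 1 = \<sigma> 2)"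
  define v where "v n = canon_trm ar A F (Var n)" for n
  have "congruence ar (term_fun_carrier ar A F) (term_fun_op ar A F) K"
    if "K \<in> {K\<alpha>, K\<beta>, K\<gamma>}" for K
    using that unfolding K\<alpha>_def K\<beta>_def K\<gamma>_def by (auto intro: term_fun_kernel_congruence)
  with assms have modular:
    "K\<alpha> \<inter> (K\<beta> O (K\<alpha> \<inter> K\<gamma>) O K\<beta>) \<subseteq> alt_comp (K\<alpha> \<inter> K\<beta>) (K\<alpha> \<inter> K\<gamma>) (2 * r)"
    unfolding modular3_alg_def by simp
  have "(v 0, v 1) \<in> K\<beta>" and "(v 1, v 2) \<in> K\<alpha> \<inter> K\<gamma>" and "(v 2, v 3) \<in> K\<beta>"
    and "(v 0, v 3) \<in> K\<alpha>"
    unfolding K\<alpha>_def K\<beta>_def K\<gamma>_def term_fun_kernel_def v_def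
    by (auto simp: canon_trm_in_carrier eval_canon_trm)
  then have "(v 0, v 3) \<in> K\<alpha> \<inter> (K\<beta> O (K\<alpha> \<inter> K\<gamma>) O K\<beta>)"
    by (meson IntI relcompI)
  with modular have "(v 0, v 3) \<in> alt_comp (K\<alpha> \<inter> K\<beta>) (K\<alpha> \<inter> K\<gamma>) (2 * r)"
    by (rule subsetD)
  then obtain e where "e 0 = v 0" and "e (2 * r) = v 3"
    and "\<forall>i<2 * r. (e i, e (Suc i)) \<in> (if even i then K\<alpha> \<inter> K\<beta> else K\<alpha> \<inter> K\<gamma>)"
    by (auto dest: alt_comp_chain)
  then have "day_terms ar A F r e"
    unfolding v_def K\<alpha>_def K\<beta>_def K\<gamma>_def by (rule day_terms_of_kernel_chain)
  then show ?thesis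
    by blast
qed

theorem proposition7p1:
  fixes ar :: "'f \<Rightarrow> nat"
    and \<Sigma> :: "(('f, nat) trm \<times> ('f, nat) trm) set"
    and r l :: nat
    and A :: "'a set" and F :: "'f \<Rightarrow> 'a list \<Rightarrow> 'a"
    and \<alpha> \<beta> \<gamma> :: "'a rel"
  assumes wf: "\<forall>(s, t)\<in>\<Sigma>. wf_trm ar s \<and> wf_trm ar t"
    and r: "r \<ge> 1"
    and modular: "\<And>(B :: ('f, nat) trm set) G. in_variety ar \<Sigma> B G \<Longrightarrow> modular3_alg ar B G (2 * r)"
    and l: "l \<ge> 1"
    and alg: "in_variety ar \<Sigma> A F"
    and cong: "congruence ar A F \<alpha>" "congruence ar A F \<beta>" "congruence ar A F \<gamma>"
  shows "Arel l \<alpha> \<beta> \<gamma> \<subseteq> alt_comp (\<alpha> \<inter> \<beta>) (\<alpha> \<inter> \<gamma>) (2 * r ^ l)"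
proof -
  obtain e where "day_terms ar A F r e"
    using day_terms_exist modular[OF term_fun_in_variety[OF wf alg]] by blast
  then interpret day_terms ar A F r e .
  have "Arel_ext l \<alpha> \<beta> \<gamma> \<subseteq> ((\<alpha> \<inter> \<beta>) O (\<alpha> \<inter> \<gamma>)) ^^ (r ^ l)"
    using cong by (rule Arel_ext_subset_relpow)
  then show ?thesis
    using Arel_subset_Arel_ext alt_comp_even_eq_relpow by (metis subset_trans)
qed

end
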